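(* Let $p>0$, $p\neq1$, $\frac1p+\frac1q=1$, $\sigma\in\mathbb{R}$, $\delta\in\{-1,1\}$, let $H$ and $f$ be non-negative measurable functions on $\mathbb{R}$, and let $K(\sigma):=\int_{-\infty}^\infty H(t)|t|^{\sigma-1}dt$. Set $$J:=\int_{-\infty}^\infty|y|^{p\sigma-1}\left(\int_{-\infty}^\infty H(x^\delta y)f(x)\,dx\right)^pdy .$$ (i) If $p>1$, then $J\leq K^p(\sigma)\int_{-\infty}^\infty|x|^{p(1-\delta\sigma)-1}f^p(x)\,dx$. (ii) If $0<p<1$, then $J\geq K^p(\sigma)\int_{-\infty}^\infty|x|^{p(1-\delta\sigma)-1}f^p(x)\,dx$. *)

theory Defs
  imports "HOL-Analysis.Analysis"
begin

text \<open>Real power of an extended non-negative real, for exponent p > 0: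
  finite values are raised by powr, and infinity stays infinity.\<close>
definition enn_powr :: "ennreal \<Rightarrow> real \<Rightarrow> ennreal" where
  "enn_powr a p = (if a = top then top else ennreal (enn2real a powr p))"

definition Kfun :: "(real \<Rightarrow> real) \<Rightarrow> real \<Rightarrow> ennreal" where
  "Kfun H \<sigma> = (\<integral>\<^sup>+ t. ennreal (H t * \<bar>t\<bar> powr (\<sigma> - 1)) \<partial>lborel)"

definition Jfun :: "(real \<Rightarrow> real) \<Rightarrow> (real \<Rightarrow> real) \<Rightarrow> real \<Rightarrow> real \<Rightarrow> int \<Rightarrow> ennreal" where
  "Jfun H f p \<sigma> \<delta> = (\<integral>\<^sup>+ y. ennreal (\<bar>y\<bar> powr (p * \<sigma> - 1)) *
      enn_powr (\<integral>\<^sup>+ x. ennreal (H (x powi \<delta> * y) * f x) \<partial>lborel) p \<partial>lborel)"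

definition Ifun :: "(real \<Rightarrow> real) \<Rightarrow> real \<Rightarrow> real \<Rightarrow> int \<Rightarrow> ennreal" where
  "Ifun f p \<sigma> \<delta> = (\<integral>\<^sup>+ x. ennreal (\<bar>x\<bar> powr (p * (1 - of_int \<delta> * \<sigma>) - 1) * f x powr p) \<partial>lborel)"

end

(*
  For delta = 1 the substitution t = x y gives, for fixed y, integral H(x y) |x y|^(sigma-1) dx = K(sigma)/|y|.
  For p > 1, Hoelder's inequality applied to the factorisation
    H(x y) f(x) = (H(x y) |x y|^(sigma-1))^(1-1/p) * (H(x y) f(x)^p |x y|^((sigma-1)(1-p)))^(1/p)
  bounds the p-th power of the inner integral by (K(sigma)/|y|)^(p-1) times the integral of the second
  factor; integrating against |y|^(p sigma - 1) and exchanging the order of integration produces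
  K(sigma) once more, times the weighted integral of f^p. For 0 < p < 1 the same identity, solved for the
  second factor, is split by Hoelder with exponents 1/p and 1/(1-p), which reverses the inequality
  as long as K(sigma) is finite; an infinite K(sigma) is approximated by truncations of H.
  The case delta = -1 reduces to delta = 1 by the substitution x = 1/u, which replaces f by f(1/u)/u^2.
*)

theory Submission
  imports Defs
begin

lemma enn_powr_ennreal: "c \<ge> 0 \<Longrightarrow> enn_powr (ennreal c) p = ennreal (c powr p)"
  by (simp add: enn_powr_def)

lemma enn_powr_top [simp]: "enn_powr top p = top"
  by (simp add: enn_powr_def)

lemma enn_powr_0 [simp]: "enn_powr 0 p = 0"
  by (simp add: enn_powr_def)

lemma enn_powr_1 [simp]: "enn_powr a 1 = a"
  by (cases a) (auto simp: enn_powr_def)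

lemma enn_powr_pos: "b > 0 \<Longrightarrow> p > 0 \<Longrightarrow> enn_powr b p > 0"
  by (cases b) (auto simp: enn_powr_def)

lemma enn_powr_mono:
  assumes "p > 0" "a \<le> b"
  shows "enn_powr a p \<le> enn_powr b p"
proof (cases b)
  case (real r)
  with assms(2) obtain s where "a = ennreal s" "0 \<le> s" "s \<le> r"
    by (cases a) (auto simp: top_unique)
  with real assms(1) show ?thesis
    by (simp add: enn_powr_ennreal powr_mono2 ennreal_leI)
qed simp

lemma enn_powr_mult:
  assumes "p > 0"
  shows "enn_powr (a * b) p = enn_powr a p * enn_powr b p"
proof (cases a; cases b)
  fix r s assume "a = ennreal r" "0 \<le> r" "b = ennreal s" "0 \<le> s"
  then show ?thesis
    by (simp add: enn_powr_ennreal powr_mult flip: ennreal_mult)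
qed (use assms in \<open>auto simp: enn_powr_def ennreal_mult_top ennreal_top_mult\<close>)

lemma enn_powr_powr: "p > 0 \<Longrightarrow> q > 0 \<Longrightarrow> enn_powr (enn_powr a q) p = enn_powr a (q * p)"
  by (cases a) (auto simp: enn_powr_def powr_powr)

lemma enn_powr_add: "r > 0 \<Longrightarrow> s > 0 \<Longrightarrow> enn_powr a r * enn_powr a s = enn_powr a (r + s)"
  by (cases a) (auto simp: enn_powr_def powr_add ennreal_mult)

lemma measurable_enn_powr [measurable]:
  assumes [measurable]: "u \<in> borel_measurable M"
  shows "(\<lambda>x. enn_powr (u x) p) \<in> borel_measurable M"
  unfolding enn_powr_def by measurable

lemma Youngs_inequality_scaled:
  fixes u v \<alpha> \<beta> a :: real
  assumes "0 \<le> u" "0 \<le> v" "\<alpha> > 0" "\<beta> > 0" "0 < a" "a < 1"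
  shows "u powr a * v powr (1 - a) \<le> \<alpha> powr a * \<beta> powr (1 - a) * (a / \<alpha> * u + (1 - a) / \<beta> * v)"
proof (cases "u = 0 \<or> v = 0")
  case False
  with assms have "(u / \<alpha>) powr a * (v / \<beta>) powr (1 - a) \<le> a * (u / \<alpha>) + (1 - a) * (v / \<beta>)"
    by (intro Youngs_inequality_0) auto
  then have "\<alpha> powr a * \<beta> powr (1 - a) * ((u / \<alpha>) powr a * (v / \<beta>) powr (1 - a))
      \<le> \<alpha> powr a * \<beta> powr (1 - a) * (a / \<alpha> * u + (1 - a) / \<beta> * v)"
    by (intro mult_left_mono) auto
  also have "\<alpha> powr a * \<beta> powr (1 - a) * ((u / \<alpha>) powr a * (v / \<beta>) powr (1 - a))
      = u powr a * v powr (1 - a)"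
    using assms by (simp add: powr_divide)
  finally show ?thesis .
qed (use assms in auto)

lemma nn_integral_Hoelder:
  fixes F G :: "'a \<Rightarrow> real"
  assumes [measurable]: "F \<in> borel_measurable M" "G \<in> borel_measurable M"
    and F: "\<And>x. F x \<ge> 0" and G: "\<And>x. G x \<ge> 0" and a: "0 < a" "a < 1"
  shows "(\<integral>\<^sup>+x. ennreal (F x powr a * G x powr (1 - a)) \<partial>M)
     \<le> enn_powr (\<integral>\<^sup>+x. F x \<partial>M) a * enn_powr (\<integral>\<^sup>+x. G x \<partial>M) (1 - a)"
proof -
  define A where "A = (\<integral>\<^sup>+x. F x \<partial>M)"
  define B where "B = (\<integral>\<^sup>+x. G x \<partial>M)"
  consider "A = 0 \<or> B = 0" | "A = top \<or> B = top" "A > 0" "B > 0"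
    | \<alpha> \<beta> where "A = ennreal \<alpha>" "\<alpha> > 0" "B = ennreal \<beta>" "\<beta> > 0"
    by (cases A; cases B) (fastforce simp: zero_less_iff_neq_zero)+
  then show ?thesis
  proof cases
    case 1
    then have "AE x in M. F x = 0 \<or> G x = 0"
      using F G by (auto simp: A_def B_def nn_integral_0_iff_AE)
    then have "(\<integral>\<^sup>+x. ennreal (F x powr a * G x powr (1 - a)) \<partial>M) = 0"
      by (subst nn_integral_0_iff_AE) auto
    then show ?thesis by simp
  next
    case 2
    then have "enn_powr A a * enn_powr B (1 - a) = top"
      using a enn_powr_pos[of A a] enn_powr_pos[of B "1 - a"] by (auto simp: ennreal_mult_eq_top_iff)
    then show ?thesis by (simp add: A_def B_def)
  next
    case 3
    define c where "c = \<alpha> powr a * \<beta> powr (1 - a)"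
    define s t where "s = c * (a / \<alpha>)" and "t = c * ((1 - a) / \<beta>)"
    have st: "s \<ge> 0" "t \<ge> 0"
      using 3 a by (auto simp: s_def t_def c_def)
    have "(\<integral>\<^sup>+x. ennreal (F x powr a * G x powr (1 - a)) \<partial>M)
        \<le> (\<integral>\<^sup>+x. ennreal s * F x + ennreal t * G x \<partial>M)"
    proof (intro nn_integral_mono)
      fix x
      have "F x powr a * G x powr (1 - a) \<le> s * F x + t * G x"
        using Youngs_inequality_scaled[OF F[of x] G[of x] _ _ a, of \<alpha> \<beta>] 3
        by (simp add: s_def t_def c_def algebra_simps)
      then show "ennreal (F x powr a * G x powr (1 - a)) \<le> ennreal s * F x + ennreal t * G x"
        using st F[of x] G[of x]
        by (simp add: ennreal_leI flip: ennreal_mult ennreal_plus)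
    qed
    also have "\<dots> = ennreal s * A + ennreal t * B"
      by (simp add: A_def B_def nn_integral_add nn_integral_cmult)
    also have "\<dots> = ennreal c"
      using 3 st by (simp add: s_def t_def field_simps flip: ennreal_mult ennreal_plus)
    also have "\<dots> = enn_powr A a * enn_powr B (1 - a)"
      using 3 by (simp add: enn_powr_ennreal c_def ennreal_mult)
    finally show ?thesis by (simp add: A_def B_def)
  qed
qed

lemma nn_integral_lborel_scale:
  fixes h :: "real \<Rightarrow> ennreal"
  assumes [measurable]: "h \<in> borel_measurable borel" and c: "c \<noteq> 0"
  shows "(\<integral>\<^sup>+x. h (x * c) \<partial>lborel) = ennreal (1 / \<bar>c\<bar>) * (\<integral>\<^sup>+t. h t \<partial>lborel)"
proof -
  have "ennreal (1 / \<bar>c\<bar>) * (\<integral>\<^sup>+t. h t \<partial>lborel)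
      = ennreal (1 / \<bar>c\<bar>) * ennreal \<bar>c\<bar> * (\<integral>\<^sup>+x. h (c * x) \<partial>lborel)"
    using nn_integral_real_affine[OF assms(1) c, of 0] by (simp add: mult.assoc)
  also have "ennreal (1 / \<bar>c\<bar>) * ennreal \<bar>c\<bar> = 1"
    using c by (simp flip: ennreal_mult)
  finally show ?thesis by (simp add: mult.commute)
qed

lemma Kfun_scale:
  assumes [measurable]: "H \<in> borel_measurable borel" and "y \<noteq> 0"
  shows "(\<integral>\<^sup>+x. ennreal (H (x * y) * \<bar>x * y\<bar> powr (\<sigma> - 1)) \<partial>lborel) = ennreal (1 / \<bar>y\<bar>) * Kfun H \<sigma>"
  unfolding Kfun_def
  by (rule nn_integral_lborel_scale[where h = "\<lambda>t. ennreal (H t * \<bar>t\<bar> powr (\<sigma> - 1))"]) (use assms in auto)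

lemma Kfun_scale_weighted:
  assumes [measurable]: "H \<in> borel_measurable borel" and H: "\<And>t. H t \<ge> 0" and x: "x \<noteq> 0"
  shows "(\<integral>\<^sup>+y. ennreal (H (x * y) * \<bar>x * y\<bar> powr e * \<bar>y\<bar> powr (\<sigma> - 1 - e)) \<partial>lborel)
       = ennreal (\<bar>x\<bar> powr (e - \<sigma>)) * Kfun H \<sigma>"
proof -
  have weight: "\<bar>x * y\<bar> powr e * \<bar>y\<bar> powr (\<sigma> - 1 - e) = \<bar>x\<bar> powr (1 + e - \<sigma>) * \<bar>y * x\<bar> powr (\<sigma> - 1)"
    for y :: real
    using x by (cases "y = 0") (simp_all add: abs_mult powr_mult powr_add [symmetric] algebra_simps)
  have "(\<integral>\<^sup>+y. ennreal (H (x * y) * \<bar>x * y\<bar> powr e * \<bar>y\<bar> powr (\<sigma> - 1 - e)) \<partial>lborel)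
      = (\<integral>\<^sup>+y. ennreal (\<bar>x\<bar> powr (1 + e - \<sigma>)) * ennreal (H (y * x) * \<bar>y * x\<bar> powr (\<sigma> - 1)) \<partial>lborel)"
  proof (rule nn_integral_cong)
    fix y :: real
    have "H (x * y) * \<bar>x * y\<bar> powr e * \<bar>y\<bar> powr (\<sigma> - 1 - e)
        = \<bar>x\<bar> powr (1 + e - \<sigma>) * (H (y * x) * \<bar>y * x\<bar> powr (\<sigma> - 1))"
      by (simp add: mult.assoc weight mult.commute[of y x] mult.left_commute[of "H (x * y)"])
    then show "ennreal (H (x * y) * \<bar>x * y\<bar> powr e * \<bar>y\<bar> powr (\<sigma> - 1 - e))
        = ennreal (\<bar>x\<bar> powr (1 + e - \<sigma>)) * ennreal (H (y * x) * \<bar>y * x\<bar> powr (\<sigma> - 1))"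
      using H[of "y * x"] by (simp add: ennreal_mult)
  qed
  also have "\<dots> = ennreal (\<bar>x\<bar> powr (1 + e - \<sigma>)) * ennreal (1 / \<bar>x\<bar>) * Kfun H \<sigma>"
    by (simp add: nn_integral_cmult Kfun_scale[OF _ x] mult.assoc)
  also have "ennreal (\<bar>x\<bar> powr (1 + e - \<sigma>)) * ennreal (1 / \<bar>x\<bar>) = ennreal (\<bar>x\<bar> powr (e - \<sigma>))"
    using x by (simp add: powr_add powr_diff flip: ennreal_mult)
  finally show ?thesis .
qed

lemma nn_integral_Fubini_Kfun:
  fixes H g :: "real \<Rightarrow> real"
  assumes [measurable]: "H \<in> borel_measurable borel" and H: "\<And>t. H t \<ge> 0"
    and [measurable]: "g \<in> borel_measurable borel" and g: "\<And>x. g x \<ge> 0"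
  shows "(\<integral>\<^sup>+y. ennreal (\<bar>y\<bar> powr (\<sigma> - 1 - e)) * (\<integral>\<^sup>+x. ennreal (H (x * y) * g x * \<bar>x * y\<bar> powr e) \<partial>lborel) \<partial>lborel)
     = Kfun H \<sigma> * (\<integral>\<^sup>+x. ennreal (\<bar>x\<bar> powr (e - \<sigma>) * g x) \<partial>lborel)"
proof -
  have "(\<integral>\<^sup>+y. ennreal (\<bar>y\<bar> powr (\<sigma> - 1 - e)) * (\<integral>\<^sup>+x. ennreal (H (x * y) * g x * \<bar>x * y\<bar> powr e) \<partial>lborel) \<partial>lborel)
      = (\<integral>\<^sup>+y. \<integral>\<^sup>+x. ennreal (g x) * ennreal (H (x * y) * \<bar>x * y\<bar> powr e * \<bar>y\<bar> powr (\<sigma> - 1 - e)) \<partial>lborel \<partial>lborel)"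
    using H g by (simp add: nn_integral_cmult[symmetric] mult_ac flip: ennreal_mult)
  also have "\<dots> = (\<integral>\<^sup>+x. \<integral>\<^sup>+y. ennreal (g x) * ennreal (H (x * y) * \<bar>x * y\<bar> powr e * \<bar>y\<bar> powr (\<sigma> - 1 - e)) \<partial>lborel \<partial>lborel)"
    by (rule lborel_pair.Fubini') measurable
  also have "\<dots> = (\<integral>\<^sup>+x. ennreal (g x) * (ennreal (\<bar>x\<bar> powr (e - \<sigma>)) * Kfun H \<sigma>) \<partial>lborel)"
  proof (rule nn_integral_cong_AE)
    show "AE x in lborel. (\<integral>\<^sup>+y. ennreal (g x) * ennreal (H (x * y) * \<bar>x * y\<bar> powr e * \<bar>y\<bar> powr (\<sigma> - 1 - e)) \<partial>lborel)
        = ennreal (g x) * (ennreal (\<bar>x\<bar> powr (e - \<sigma>)) * Kfun H \<sigma>)"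
      using AE_lborel_singleton[of 0]
      by eventually_elim (simp add: nn_integral_cmult Kfun_scale_weighted[OF assms(1) H])
  qed
  also have "\<dots> = Kfun H \<sigma> * (\<integral>\<^sup>+x. ennreal (\<bar>x\<bar> powr (e - \<sigma>) * g x) \<partial>lborel)"
    using g by (simp add: nn_integral_cmult[symmetric] mult_ac flip: ennreal_mult)
  finally show ?thesis .
qed

lemma mixed_weight_eq_powr_interpolation:
  fixes u v w p s :: real
  assumes "u \<ge> 0" "v \<ge> 0" "w \<ge> 0"
  shows "u * v powr p * w powr (s * (1 - p)) = (u * v) powr p * (u * w powr s) powr (1 - p)"
  using assms by (cases "u = 0") (simp_all add: powr_mult powr_powr powr_add [symmetric] mult_ac)

lemma mult_eq_powr_interpolation:
  fixes u v w p s :: real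
  assumes "u \<ge> 0" "v \<ge> 0" "w > 0" "p > 0"
  shows "u * v = (u * w powr s) powr (1 - 1 / p) * (u * v powr p * w powr (s * (1 - p))) powr (1 / p)"
  using assms
  by (cases "u = 0")
     (simp_all add: powr_mult powr_powr powr_add [symmetric] field_simps)

lemma inner_integral_powr_le_mixed:
  fixes H f :: "real \<Rightarrow> real"
  assumes [measurable]: "H \<in> borel_measurable borel" and H: "\<And>t. H t \<ge> 0"
    and [measurable]: "f \<in> borel_measurable borel" and f: "\<And>x. f x \<ge> 0"
    and p: "p > 1" and y: "y \<noteq> 0"
  shows "enn_powr (\<integral>\<^sup>+x. ennreal (H (x * y) * f x) \<partial>lborel) p
    \<le> enn_powr (Kfun H \<sigma>) (p - 1) * ennreal (\<bar>y\<bar> powr (1 - p))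
      * (\<integral>\<^sup>+x. ennreal (H (x * y) * f x powr p * \<bar>x * y\<bar> powr ((\<sigma> - 1) * (1 - p))) \<partial>lborel)"
    (is "_ \<le> _ * ?\<Phi>")
proof -
  define a where "a = 1 - 1 / p"
  have a: "0 < a" "a < 1" "1 - a = 1 / p" "a * p = p - 1"
    using p by (auto simp: a_def field_simps)
  have "H (x * y) * f x = (H (x * y) * \<bar>x * y\<bar> powr (\<sigma> - 1)) powr a
      * (H (x * y) * f x powr p * \<bar>x * y\<bar> powr ((\<sigma> - 1) * (1 - p))) powr (1 - a)"
    if "x \<noteq> 0" for x
    using mult_eq_powr_interpolation[of "H (x * y)" "f x" "\<bar>x * y\<bar>" p "\<sigma> - 1"] H f that y p
    by (simp add: a_def)
  then have "(\<integral>\<^sup>+x. ennreal (H (x * y) * f x) \<partial>lborel)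
     = (\<integral>\<^sup>+x. ennreal ((H (x * y) * \<bar>x * y\<bar> powr (\<sigma> - 1)) powr a
          * (H (x * y) * f x powr p * \<bar>x * y\<bar> powr ((\<sigma> - 1) * (1 - p))) powr (1 - a)) \<partial>lborel)"
    by (intro nn_integral_cong_AE) (use AE_lborel_singleton[of 0] in \<open>eventually_elim, simp\<close>)
  also have "\<dots> \<le> enn_powr (\<integral>\<^sup>+x. ennreal (H (x * y) * \<bar>x * y\<bar> powr (\<sigma> - 1)) \<partial>lborel) a * enn_powr ?\<Phi> (1 - a)"
    using H f by (intro nn_integral_Hoelder a) auto
  also have "\<dots> = enn_powr (ennreal (1 / \<bar>y\<bar>) * Kfun H \<sigma>) a * enn_powr ?\<Phi> (1 - a)"
    by (simp add: Kfun_scale[OF assms(1) y])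
  finally have "enn_powr (\<integral>\<^sup>+x. ennreal (H (x * y) * f x) \<partial>lborel) p
      \<le> enn_powr (enn_powr (ennreal (1 / \<bar>y\<bar>) * Kfun H \<sigma>) a * enn_powr ?\<Phi> (1 - a)) p"
    using p by (intro enn_powr_mono) auto
  also have "\<dots> = enn_powr (Kfun H \<sigma>) (p - 1) * ennreal ((1 / \<bar>y\<bar>) powr (p - 1)) * ?\<Phi>"
    using p a by (simp add: enn_powr_mult enn_powr_powr enn_powr_ennreal powr_powr mult_ac)
  also have "(1 / \<bar>y\<bar>) powr (p - 1) = \<bar>y\<bar> powr (1 - p)"
    by (simp add: powr_divide powr_minus_divide [symmetric])
  finally show ?thesis .
qed

lemma Jfun_upper_bound:
  fixes H f :: "real \<Rightarrow> real"
  assumes [measurable]: "H \<in> borel_measurable borel" and H: "\<And>t. H t \<ge> 0"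
    and [measurable]: "f \<in> borel_measurable borel" and f: "\<And>x. f x \<ge> 0" and p: "p > 1"
  shows "Jfun H f p \<sigma> 1 \<le> enn_powr (Kfun H \<sigma>) p * Ifun f p \<sigma> 1"
proof -
  define e where "e = (\<sigma> - 1) * (1 - p)"
  define \<Phi> where "\<Phi> y = (\<integral>\<^sup>+x. ennreal (H (x * y) * f x powr p * \<bar>x * y\<bar> powr e) \<partial>lborel)" for y
  let ?K = "Kfun H \<sigma>"
  have pointwise: "ennreal (\<bar>y\<bar> powr (p * \<sigma> - 1)) * enn_powr (\<integral>\<^sup>+x. ennreal (H (x * y) * f x) \<partial>lborel) p
      \<le> enn_powr ?K (p - 1) * (ennreal (\<bar>y\<bar> powr (\<sigma> - 1 - e)) * \<Phi> y)" for y
  proof (cases "y = 0")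
    case False
    have "ennreal (\<bar>y\<bar> powr (p * \<sigma> - 1)) * enn_powr (\<integral>\<^sup>+x. ennreal (H (x * y) * f x) \<partial>lborel) p
        \<le> ennreal (\<bar>y\<bar> powr (p * \<sigma> - 1)) * (enn_powr ?K (p - 1) * ennreal (\<bar>y\<bar> powr (1 - p)) * \<Phi> y)"
      unfolding \<Phi>_def e_def using inner_integral_powr_le_mixed[OF assms False] by (intro mult_left_mono) auto
    also have "\<dots> = enn_powr ?K (p - 1) * (ennreal (\<bar>y\<bar> powr (\<sigma> - 1 - e)) * \<Phi> y)"
      by (simp add: e_def algebra_simps powr_add [symmetric] flip: ennreal_mult)
    finally show ?thesis .
  qed simp
  have "Jfun H f p \<sigma> 1 \<le> (\<integral>\<^sup>+y. enn_powr ?K (p - 1) * (ennreal (\<bar>y\<bar> powr (\<sigma> - 1 - e)) * \<Phi> y) \<partial>lborel)"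
    unfolding Jfun_def by (intro nn_integral_mono) (simp add: pointwise)
  also have "\<dots> = enn_powr ?K (p - 1) * (\<integral>\<^sup>+y. ennreal (\<bar>y\<bar> powr (\<sigma> - 1 - e)) * \<Phi> y \<partial>lborel)"
    unfolding \<Phi>_def by (rule nn_integral_cmult) measurable
  also have "\<dots> = enn_powr ?K (p - 1) * (?K * (\<integral>\<^sup>+x. ennreal (\<bar>x\<bar> powr (e - \<sigma>) * f x powr p) \<partial>lborel))"
    unfolding \<Phi>_def using H f by (subst nn_integral_Fubini_Kfun) auto
  also have "\<dots> = enn_powr ?K p * (\<integral>\<^sup>+x. ennreal (\<bar>x\<bar> powr (e - \<sigma>) * f x powr p) \<partial>lborel)"
    using enn_powr_add[of "p - 1" 1 ?K] p by (simp add: mult.assoc [symmetric])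
  also have "e - \<sigma> = p * (1 - \<sigma>) - 1"
    by (simp add: e_def algebra_simps)
  finally show ?thesis
    by (simp add: Ifun_def)
qed

lemma mixed_integral_le_inner_integral_powr:
  fixes H f :: "real \<Rightarrow> real"
  assumes [measurable]: "H \<in> borel_measurable borel" and H: "\<And>t. H t \<ge> 0"
    and [measurable]: "f \<in> borel_measurable borel" and f: "\<And>x. f x \<ge> 0"
    and p: "0 < p" "p < 1" and y: "y \<noteq> 0"
  shows "(\<integral>\<^sup>+x. ennreal (H (x * y) * f x powr p * \<bar>x * y\<bar> powr ((\<sigma> - 1) * (1 - p))) \<partial>lborel)
    \<le> enn_powr (Kfun H \<sigma>) (1 - p) * ennreal (\<bar>y\<bar> powr (p - 1))
      * enn_powr (\<integral>\<^sup>+x. ennreal (H (x * y) * f x) \<partial>lborel) p"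
proof -
  have "(\<integral>\<^sup>+x. ennreal (H (x * y) * f x powr p * \<bar>x * y\<bar> powr ((\<sigma> - 1) * (1 - p))) \<partial>lborel)
      = (\<integral>\<^sup>+x. ennreal ((H (x * y) * f x) powr p * (H (x * y) * \<bar>x * y\<bar> powr (\<sigma> - 1)) powr (1 - p)) \<partial>lborel)"
    using H f by (simp add: mixed_weight_eq_powr_interpolation)
  also have "\<dots> \<le> enn_powr (\<integral>\<^sup>+x. ennreal (H (x * y) * f x) \<partial>lborel) p
      * enn_powr (\<integral>\<^sup>+x. ennreal (H (x * y) * \<bar>x * y\<bar> powr (\<sigma> - 1)) \<partial>lborel) (1 - p)"
    using H f by (intro nn_integral_Hoelder p) auto
  also have "\<dots> = enn_powr (\<integral>\<^sup>+x. ennreal (H (x * y) * f x) \<partial>lborel) p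
      * (ennreal ((1 / \<bar>y\<bar>) powr (1 - p)) * enn_powr (Kfun H \<sigma>) (1 - p))"
    using p by (simp add: Kfun_scale[OF assms(1) y] enn_powr_mult enn_powr_ennreal)
  also have "(1 / \<bar>y\<bar>) powr (1 - p) = \<bar>y\<bar> powr (p - 1)"
    by (simp add: powr_divide powr_minus_divide [symmetric])
  finally show ?thesis
    by (simp add: mult_ac)
qed

lemma Jfun_lower_bound_weighted:
  fixes H f :: "real \<Rightarrow> real"
  assumes [measurable]: "H \<in> borel_measurable borel" and H: "\<And>t. H t \<ge> 0"
    and [measurable]: "f \<in> borel_measurable borel" and f: "\<And>x. f x \<ge> 0" and p: "0 < p" "p < 1"
  shows "Kfun H \<sigma> * Ifun f p \<sigma> 1 \<le> enn_powr (Kfun H \<sigma>) (1 - p) * Jfun H f p \<sigma> 1"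
proof -
  define e where "e = (\<sigma> - 1) * (1 - p)"
  define \<Phi> where "\<Phi> y = (\<integral>\<^sup>+x. ennreal (H (x * y) * f x powr p * \<bar>x * y\<bar> powr e) \<partial>lborel)" for y
  let ?K = "Kfun H \<sigma>"
  have pointwise: "ennreal (\<bar>y\<bar> powr (\<sigma> - 1 - e)) * \<Phi> y
      \<le> enn_powr ?K (1 - p) * (ennreal (\<bar>y\<bar> powr (p * \<sigma> - 1)) * enn_powr (\<integral>\<^sup>+x. ennreal (H (x * y) * f x) \<partial>lborel) p)"
    for y
  proof (cases "y = 0")
    case False
    have "ennreal (\<bar>y\<bar> powr (\<sigma> - 1 - e)) * \<Phi> y
        \<le> ennreal (\<bar>y\<bar> powr (\<sigma> - 1 - e)) * (enn_powr ?K (1 - p) * ennreal (\<bar>y\<bar> powr (p - 1))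
          * enn_powr (\<integral>\<^sup>+x. ennreal (H (x * y) * f x) \<partial>lborel) p)"
      unfolding \<Phi>_def e_def using mixed_integral_le_inner_integral_powr[OF assms False] by (intro mult_left_mono) auto
    also have "\<dots> = enn_powr ?K (1 - p) * (ennreal (\<bar>y\<bar> powr (\<sigma> - 1 - e) * \<bar>y\<bar> powr (p - 1))
        * enn_powr (\<integral>\<^sup>+x. ennreal (H (x * y) * f x) \<partial>lborel) p)"
      by (simp add: ennreal_mult mult_ac)
    also have "\<bar>y\<bar> powr (\<sigma> - 1 - e) * \<bar>y\<bar> powr (p - 1) = \<bar>y\<bar> powr (p * \<sigma> - 1)"
      by (simp add: e_def algebra_simps flip: powr_add)
    finally show ?thesis .
  qed simp
  have "?K * Ifun f p \<sigma> 1 = ?K * (\<integral>\<^sup>+x. ennreal (\<bar>x\<bar> powr (e - \<sigma>) * f x powr p) \<partial>lborel)"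
    by (simp add: Ifun_def e_def algebra_simps)
  also have "\<dots> = (\<integral>\<^sup>+y. ennreal (\<bar>y\<bar> powr (\<sigma> - 1 - e)) * \<Phi> y \<partial>lborel)"
    unfolding \<Phi>_def using H f by (subst nn_integral_Fubini_Kfun) auto
  also have "\<dots> \<le> (\<integral>\<^sup>+y. enn_powr ?K (1 - p) * (ennreal (\<bar>y\<bar> powr (p * \<sigma> - 1))
      * enn_powr (\<integral>\<^sup>+x. ennreal (H (x * y) * f x) \<partial>lborel) p) \<partial>lborel)"
    by (intro nn_integral_mono pointwise)
  also have "\<dots> = enn_powr ?K (1 - p) * Jfun H f p \<sigma> 1"
    by (simp add: Jfun_def nn_integral_cmult)
  finally show ?thesis .
qed

lemma Jfun_lower_bound_finite:
  fixes H f :: "real \<Rightarrow> real"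
  assumes [measurable]: "H \<in> borel_measurable borel" and H: "\<And>t. H t \<ge> 0"
    and [measurable]: "f \<in> borel_measurable borel" and f: "\<And>x. f x \<ge> 0" and p: "0 < p" "p < 1"
    and K: "Kfun H \<sigma> < top"
  shows "enn_powr (Kfun H \<sigma>) p * Ifun f p \<sigma> 1 \<le> Jfun H f p \<sigma> 1"
proof (cases "Kfun H \<sigma> = 0")
  case False
  with K obtain k where k: "Kfun H \<sigma> = ennreal k" "k > 0"
    by (cases "Kfun H \<sigma>") (auto simp: zero_less_iff_neq_zero)
  have "enn_powr (Kfun H \<sigma>) p * Ifun f p \<sigma> 1 = ennreal (k powr (p - 1)) * (Kfun H \<sigma> * Ifun f p \<sigma> 1)"
    using k by (simp add: enn_powr_ennreal powr_diff mult.assoc [symmetric] flip: ennreal_mult)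
  also have "\<dots> \<le> ennreal (k powr (p - 1)) * (enn_powr (Kfun H \<sigma>) (1 - p) * Jfun H f p \<sigma> 1)"
    by (intro mult_left_mono Jfun_lower_bound_weighted[OF assms(1-6)]) simp
  also have "\<dots> = Jfun H f p \<sigma> 1"
    using k by (simp add: enn_powr_ennreal powr_add [symmetric] mult.assoc [symmetric] flip: ennreal_mult)
  finally show ?thesis .
qed simp

definition truncate_kernel :: "(real \<Rightarrow> real) \<Rightarrow> real \<Rightarrow> nat \<Rightarrow> real \<Rightarrow> real" where
  "truncate_kernel H \<sigma> n t = H t * indicator {t. H t * \<bar>t\<bar> powr (\<sigma> - 1) \<le> n \<and> \<bar>t\<bar> \<le> n} t"

lemma truncate_kernel_measurable [measurable]:
  assumes [measurable]: "H \<in> borel_measurable borel"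
  shows "truncate_kernel H \<sigma> n \<in> borel_measurable borel"
proof -
  have [measurable]: "{t. H t * \<bar>t\<bar> powr (\<sigma> - 1) \<le> n \<and> \<bar>t\<bar> \<le> n} \<in> sets borel"
    by measurable
  show ?thesis
    unfolding truncate_kernel_def by measurable
qed

lemma truncate_kernel_nonneg: "(\<And>t. H t \<ge> 0) \<Longrightarrow> truncate_kernel H \<sigma> n t \<ge> 0"
  by (simp add: truncate_kernel_def)

lemma truncate_kernel_le: "(\<And>t. H t \<ge> 0) \<Longrightarrow> truncate_kernel H \<sigma> n t \<le> H t"
  by (simp add: truncate_kernel_def indicator_def)

lemma Kfun_truncate_kernel_finite: "Kfun (truncate_kernel H \<sigma> n) \<sigma> < top"
proof -
  have "Kfun (truncate_kernel H \<sigma> n) \<sigma> \<le> (\<integral>\<^sup>+t. ennreal n * indicator {- real n .. n} t \<partial>lborel)"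
    unfolding Kfun_def by (intro nn_integral_mono) (auto simp: truncate_kernel_def indicator_def)
  also have "\<dots> < top"
    by (subst nn_integral_cmult_indicator) (auto simp: ennreal_mult_less_top)
  finally show ?thesis .
qed

lemma SUP_Kfun_truncate_kernel:
  assumes [measurable]: "H \<in> borel_measurable borel" and H: "\<And>t. H t \<ge> 0"
  shows "(SUP n. Kfun (truncate_kernel H \<sigma> n) \<sigma>) = Kfun H \<sigma>"
proof -
  have inc: "incseq (\<lambda>n t. ennreal (truncate_kernel H \<sigma> n t * \<bar>t\<bar> powr (\<sigma> - 1)))"
    using H by (intro incseq_SucI le_funI ennreal_leI) (auto simp: truncate_kernel_def indicator_def)
  have "(SUP n. ennreal (truncate_kernel H \<sigma> n t * \<bar>t\<bar> powr (\<sigma> - 1))) = ennreal (H t * \<bar>t\<bar> powr (\<sigma> - 1))"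
    for t
  proof (rule antisym)
    show "(SUP n. ennreal (truncate_kernel H \<sigma> n t * \<bar>t\<bar> powr (\<sigma> - 1))) \<le> ennreal (H t * \<bar>t\<bar> powr (\<sigma> - 1))"
      using H[of t] by (intro SUP_least ennreal_leI) (auto simp: truncate_kernel_def indicator_def)
    obtain n :: nat where "max (H t * \<bar>t\<bar> powr (\<sigma> - 1)) \<bar>t\<bar> \<le> n"
      using real_arch_simple by blast
    then have "truncate_kernel H \<sigma> n t = H t"
      by (simp add: truncate_kernel_def)
    then show "ennreal (H t * \<bar>t\<bar> powr (\<sigma> - 1)) \<le> (SUP n. ennreal (truncate_kernel H \<sigma> n t * \<bar>t\<bar> powr (\<sigma> - 1)))"
      by (intro SUP_upper2[of n]) auto
  qed
  then show ?thesis
    unfolding Kfun_def by (subst nn_integral_monotone_convergence_SUP[OF inc, symmetric]) simp_all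
qed

lemma Jfun_mono_kernel:
  fixes H H' f :: "real \<Rightarrow> real"
  assumes "\<And>t. H' t \<le> H t" "\<And>t. H' t \<ge> 0" "\<And>x. f x \<ge> 0" "p > 0"
  shows "Jfun H' f p \<sigma> \<delta> \<le> Jfun H f p \<sigma> \<delta>"
  unfolding Jfun_def
  using assms by (intro nn_integral_mono mult_left_mono enn_powr_mono ennreal_leI mult_right_mono) auto

lemma Jfun_lower_bound:
  fixes H f :: "real \<Rightarrow> real"
  assumes [measurable]: "H \<in> borel_measurable borel" and H: "\<And>t. H t \<ge> 0"
    and [measurable]: "f \<in> borel_measurable borel" and f: "\<And>x. f x \<ge> 0" and p: "0 < p" "p < 1"
  shows "enn_powr (Kfun H \<sigma>) p * Ifun f p \<sigma> 1 \<le> Jfun H f p \<sigma> 1"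
proof (cases "Kfun H \<sigma> = top")
  case True
  let ?H = "truncate_kernel H \<sigma>"
  have "of_nat n * Ifun f p \<sigma> 1 \<le> Jfun H f p \<sigma> 1" for n
  proof -
    have "ennreal (real n powr (1 / p)) < (SUP m. Kfun (?H m) \<sigma>)"
      by (simp add: SUP_Kfun_truncate_kernel[OF assms(1) H] True)
    then obtain m where "ennreal (real n powr (1 / p)) < Kfun (?H m) \<sigma>"
      by (auto simp: less_SUP_iff)
    then have "enn_powr (ennreal (real n powr (1 / p))) p \<le> enn_powr (Kfun (?H m) \<sigma>) p"
      using p by (intro enn_powr_mono) auto
    then have "of_nat n * Ifun f p \<sigma> 1 \<le> enn_powr (Kfun (?H m) \<sigma>) p * Ifun f p \<sigma> 1"
      using p by (intro mult_right_mono) (auto simp: enn_powr_ennreal powr_powr ennreal_of_nat_eq_real_of_nat)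
    also have "\<dots> \<le> Jfun (?H m) f p \<sigma> 1"
      using H f p by (intro Jfun_lower_bound_finite Kfun_truncate_kernel_finite truncate_kernel_nonneg) auto
    also have "\<dots> \<le> Jfun H f p \<sigma> 1"
      using H f p by (intro Jfun_mono_kernel truncate_kernel_le truncate_kernel_nonneg) auto
    finally show ?thesis .
  qed
  then have "(SUP n. of_nat n) * Ifun f p \<sigma> 1 \<le> Jfun H f p \<sigma> 1"
    by (simp add: SUP_mult_right_ennreal SUP_least)
  then show ?thesis
    by (cases "Ifun f p \<sigma> 1 = 0") (simp_all add: ennreal_SUP_of_nat_eq_top top_unique True)
qed (use Jfun_lower_bound_finite[OF assms] in \<open>simp add: top.not_eq_extremum\<close>)

lemma nn_integral_indicator_incseq:
  assumes [measurable]: "F \<in> borel_measurable M" and A: "range A \<subseteq> sets M" "incseq A"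
  shows "(SUP n. \<integral>\<^sup>+x. F x * indicator (A n) x \<partial>M) = (\<integral>\<^sup>+x. F x * indicator (\<Union>n. A n) x \<partial>M)"
proof -
  have "(\<Union>n. A n) \<in> sets M"
    using A by auto
  then show ?thesis
    using SUP_emeasure_incseq[of A "density M F"] A by (simp add: emeasure_density image_subset_iff)
qed

lemma incseq_inversion_intervals: "incseq (\<lambda>n. {1 / real (Suc n) .. real (Suc n)})"
  by (intro monoI) (auto simp: frac_le)

lemma UN_inversion_intervals: "(\<Union>n. {1 / real (Suc n) .. real (Suc n)}) = {0<..}"
proof (intro antisym subsetI)
  fix x :: real assume "x \<in> {0<..}"
  then have "x > 0" by simp
  obtain n :: nat where "max x (1 / x) \<le> n"
    using real_arch_simple by blast
  with \<open>x > 0\<close> have "x \<in> {1 / real (Suc n) .. real (Suc n)}"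
    by (auto simp: field_simps)
  then show "x \<in> (\<Union>n. {1 / real (Suc n) .. real (Suc n)})" by blast
next
  fix x :: real assume "x \<in> (\<Union>n. {1 / real (Suc n) .. real (Suc n)})"
  then obtain n where "1 / real (Suc n) \<le> x" by auto
  with less_le_trans[of 0 "1 / real (Suc n)" x] show "x \<in> {0<..}" by simp
qed

lemma nn_integral_inversion_interval:
  fixes h :: "real \<Rightarrow> real"
  assumes [measurable]: "h \<in> borel_measurable borel" and "0 < a" "a \<le> b"
  shows "(\<integral>\<^sup>+x. ennreal (h x) * indicator {a..b} x \<partial>lborel)
       = (\<integral>\<^sup>+u. ennreal (h (1 / u) / u\<^sup>2) * indicator {1 / b..1 / a} u \<partial>lborel)"
proof -
  have "(\<integral>\<^sup>+x. ennreal (h x) * indicator {a..b} x \<partial>lborel)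
      = (\<integral>\<^sup>+x. ennreal (h (- x)) * indicator {a..b} (- x) \<partial>lborel)"
    using nn_integral_real_affine[of "\<lambda>x. ennreal (h x) * indicator {a..b} x" "-1" 0] by simp
  also have "\<dots> = (\<integral>\<^sup>+x. h (- x) * indicator {- 1 / (1 / b)..- 1 / (1 / a)} x \<partial>lborel)"
    by (intro nn_integral_cong) (auto simp: indicator_def)
  also have "\<dots> = (\<integral>\<^sup>+u. h (- (- 1 / u)) * (1 / u\<^sup>2) * indicator {1 / b..1 / a} u \<partial>lborel)"
  proof (rule nn_integral_substitution)
    show "((\<lambda>u. - 1 / u) has_real_derivative 1 / u\<^sup>2) (at u)" if "u \<in> {1 / b..1 / a}" for u
      using that assms by (auto intro!: derivative_eq_intros simp: power2_eq_square field_simps)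
    show "continuous_on {1 / b..1 / a} (\<lambda>u. 1 / u\<^sup>2)"
      using assms by (intro continuous_intros) auto
  qed (use assms in \<open>auto simp: set_borel_measurable_def frac_le\<close>)
  also have "\<dots> = (\<integral>\<^sup>+u. ennreal (h (1 / u) / u\<^sup>2) * indicator {1 / b..1 / a} u \<partial>lborel)"
    by (intro nn_integral_cong) (auto simp: indicator_def)
  finally show ?thesis .
qed

lemma nn_integral_inversion_positive:
  fixes h :: "real \<Rightarrow> real"
  assumes [measurable]: "h \<in> borel_measurable borel"
  shows "(\<integral>\<^sup>+x. ennreal (h x) * indicator {0<..} x \<partial>lborel)
       = (\<integral>\<^sup>+u. ennreal (h (1 / u) / u\<^sup>2) * indicator {0<..} u \<partial>lborel)"
proof -
  let ?I = "\<lambda>n. {1 / real (Suc n) .. real (Suc n)}"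
  have SUP_eq: "(SUP n. \<integral>\<^sup>+x. F x * indicator (?I n) x \<partial>lborel) = (\<integral>\<^sup>+x. F x * indicator {0<..} x \<partial>lborel)"
    if [measurable]: "F \<in> borel_measurable borel" for F :: "real \<Rightarrow> ennreal"
    using nn_integral_indicator_incseq[of F lborel ?I] incseq_inversion_intervals
    unfolding UN_inversion_intervals by (simp add: image_subset_iff)
  have "(\<integral>\<^sup>+x. ennreal (h x) * indicator (?I n) x \<partial>lborel)
      = (\<integral>\<^sup>+u. ennreal (h (1 / u) / u\<^sup>2) * indicator (?I n) u \<partial>lborel)" for n
  proof -
    have "0 < 1 / real (Suc n)" "1 / real (Suc n) \<le> real (Suc n)"
      by (simp_all add: field_simps)
    from nn_integral_inversion_interval[OF assms this] show ?thesis by simp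
  qed
  then show ?thesis
    using SUP_eq[of "\<lambda>x. ennreal (h x)"] SUP_eq[of "\<lambda>u. ennreal (h (1 / u) / u\<^sup>2)"] by simp
qed

lemma nn_integral_split_sign:
  fixes F :: "real \<Rightarrow> ennreal"
  assumes [measurable]: "F \<in> borel_measurable borel"
  shows "(\<integral>\<^sup>+x. F x \<partial>lborel)
       = (\<integral>\<^sup>+x. F x * indicator {0<..} x \<partial>lborel) + (\<integral>\<^sup>+x. F (- x) * indicator {0<..} x \<partial>lborel)"
proof -
  have "(\<integral>\<^sup>+x. F x \<partial>lborel) = (\<integral>\<^sup>+x. F x * indicator {0<..} x + F x * indicator {..<0} x \<partial>lborel)"
    by (intro nn_integral_cong_AE) (use AE_lborel_singleton[of 0] in \<open>eventually_elim, auto simp: indicator_def\<close>)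
  also have "\<dots> = (\<integral>\<^sup>+x. F x * indicator {0<..} x \<partial>lborel) + (\<integral>\<^sup>+x. F x * indicator {..<0} x \<partial>lborel)"
    by (rule nn_integral_add) measurable
  also have "(\<integral>\<^sup>+x. F x * indicator {..<0} x \<partial>lborel) = (\<integral>\<^sup>+x. F (- x) * indicator {0<..} x \<partial>lborel)"
    using nn_integral_real_affine[of "\<lambda>x. F x * indicator {..<0} x" "-1" 0]
    by (simp add: indicator_def)
  finally show ?thesis .
qed

lemma nn_integral_inversion:
  fixes h :: "real \<Rightarrow> real"
  assumes [measurable]: "h \<in> borel_measurable borel"
  shows "(\<integral>\<^sup>+x. ennreal (h x) \<partial>lborel) = (\<integral>\<^sup>+u. ennreal (h (1 / u) / u\<^sup>2) \<partial>lborel)"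
  using nn_integral_inversion_positive[of h] nn_integral_inversion_positive[of "\<lambda>x. h (- x)"]
  by (simp add: nn_integral_split_sign[of "\<lambda>x. ennreal (h x)"]
      nn_integral_split_sign[of "\<lambda>u. ennreal (h (1 / u) / u\<^sup>2)"])

lemma inversion_weight_eq:
  fixes u v p \<sigma> :: real
  assumes v: "v \<ge> 0"
  shows "(1 / \<bar>u\<bar>) powr (p * (1 + \<sigma>) - 1) * v powr p / u\<^sup>2 = \<bar>u\<bar> powr (p * (1 - \<sigma>) - 1) * (v / u\<^sup>2) powr p"
proof (cases "u = 0")
  case False
  define A where "A = \<bar>u\<bar>"
  have A: "A > 0" "u\<^sup>2 = A * A"
    using False by (simp_all add: A_def power2_eq_square)
  have "(1 / A) powr (p * (1 + \<sigma>) - 1) * v powr p / (A * A) = v powr p * A powr (1 - p * (1 + \<sigma>) - 2)"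
    using A by (simp add: powr_minus_divide powr_divide powr_diff field_simps)
  also have "1 - p * (1 + \<sigma>) - 2 = (p * (1 - \<sigma>) - 1) - 2 * p"
    by (simp add: algebra_simps)
  also have "v powr p * A powr ((p * (1 - \<sigma>) - 1) - 2 * p) = A powr (p * (1 - \<sigma>) - 1) * (v / (A * A)) powr p"
    using A v by (simp add: powr_diff powr_divide powr_mult powr_add field_simps)
  finally show ?thesis
    using A by (simp add: A_def)
qed simp

lemma Jfun_inversion:
  assumes [measurable]: "H \<in> borel_measurable borel" "f \<in> borel_measurable borel"
  shows "Jfun H f p \<sigma> (- 1) = Jfun H (\<lambda>u. f (1 / u) / u\<^sup>2) p \<sigma> 1"
proof -
  have "(\<integral>\<^sup>+x. ennreal (H (x powi - 1 * y) * f x) \<partial>lborel)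
      = (\<integral>\<^sup>+u. ennreal (H (u * y) * (f (1 / u) / u\<^sup>2)) \<partial>lborel)" for y
    using nn_integral_inversion[of "\<lambda>x. H (inverse x * y) * f x"] by (simp add: power_int_minus)
  then show ?thesis
    by (simp add: Jfun_def)
qed

lemma Ifun_inversion:
  assumes [measurable]: "f \<in> borel_measurable borel" and "\<And>x. f x \<ge> 0"
  shows "Ifun f p \<sigma> (- 1) = Ifun (\<lambda>u. f (1 / u) / u\<^sup>2) p \<sigma> 1"
  using nn_integral_inversion[of "\<lambda>x. \<bar>x\<bar> powr (p * (1 + \<sigma>) - 1) * f x powr p"]
  by (simp add: Ifun_def inversion_weight_eq assms(2))

theorem lemma3:
  fixes p q \<sigma> :: real and \<delta> :: int and H f :: "real \<Rightarrow> real"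
  assumes "p > 0" and "p \<noteq> 1" and "1 / p + 1 / q = 1"
    and "\<delta> \<in> {-1, 1}"
    and "H \<in> borel_measurable borel" and "\<And>t. H t \<ge> 0"
    and "f \<in> borel_measurable borel" and "\<And>x. f x \<ge> 0"
  shows "(p > 1 \<longrightarrow> Jfun H f p \<sigma> \<delta> \<le> enn_powr (Kfun H \<sigma>) p * Ifun f p \<sigma> \<delta>)
       \<and> (p < 1 \<longrightarrow> Jfun H f p \<sigma> \<delta> \<ge> enn_powr (Kfun H \<sigma>) p * Ifun f p \<sigma> \<delta>)"
proof -
  note [measurable] = assms(5,7)
  have bounds: "(p > 1 \<longrightarrow> Jfun H g p \<sigma> 1 \<le> enn_powr (Kfun H \<sigma>) p * Ifun g p \<sigma> 1)
      \<and> (p < 1 \<longrightarrow> Jfun H g p \<sigma> 1 \<ge> enn_powr (Kfun H \<sigma>) p * Ifun g p \<sigma> 1)"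
    if "g \<in> borel_measurable borel" "\<And>x. g x \<ge> 0" for g
    using Jfun_upper_bound[OF assms(5,6) that] Jfun_lower_bound[OF assms(5,6) that assms(1)] by blast
  from assms(4) consider "\<delta> = 1" | "\<delta> = -1" by auto
  then show ?thesis
  proof cases
    case 1
    then show ?thesis using bounds[OF assms(7,8)] by simp
  next
    case 2
    have "(\<lambda>u. f (1 / u) / u\<^sup>2) \<in> borel_measurable borel" by measurable
    with assms(8) show ?thesis
      using bounds[of "\<lambda>u. f (1 / u) / u\<^sup>2"] by (simp add: 2 Jfun_inversion Ifun_inversion)
  qed
qed

end
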